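(* In the setting of the context, suppose $\delta_1\ge\delta_2\ge\cdots\ge\delta_s$. Then every vector of $C^\perp\setminus C$ has weight at least $\min_{1\le j\le s}\delta_jn_2(k_j+1)$. Consequently the relative minimum distance $\delta$ of the generalized concatenated quantum code $Q$ (of length $n_1n_2$ and rate $R=r-\frac{2r}{s}\sum_{j=1}^s r'_j$, where $r=sm/n_2$ and $r'_j=k_j/n_1$) satisfies \[ \delta\ge\min_{1\le j\le s}\delta_j r'_j . \]
   Context: $\mathbb{F}_4=\{0,1,\omega,\omega^2\}$, $\omega^2=\omega+1$, $\bar x=x^2$; trace inner product $\langle u,v\rangle=\sum_i(u_i\bar v_i+\bar u_iv_i)\in\mathbb{F}_2$; additive codes are $\mathbb{F}_2$-subspaces, $C^\perp$ is the trace dual, self-orthogonal means $C\subseteq C^\perp$; weight = number of nonzero coordinates; a stabilizer code $[[N,K,D]]$ is given by a self-orthogonal $C$ with $|C|=2^{N-K}$ such that all vectors of $C^\perp\setminus C$ have weight $\ge D$. Outer codes: let $s\ge2$, $m\ge2$, $n_1=2^m-1$, and integers $1\le k_i\le 2^{m-1}-1$ ($1\le i\le s$). For each $i$, let $B_i\subseteq B_i^\perp\subseteq\mathbb{F}_4^{mn_1}$ be the quantum Reed–Solomon pair $B_i=\omega\mathcal B(C^{(i)}_{\rm RS})+\bar\omega\mathcal B(C^{(i)}_{\rm RS})$, $B_i^\perp=\omega\mathcal B(C^{(i)\perp}_{\rm RS})+\bar\omega\mathcal B(C^{(i)\perp}_{\rm RS})$, where $C^{(i)}_{\rm RS}$ is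 the cyclic Reed–Solomon code of length $n_1$ over $\mathbb{F}_{2^m}$ with generator polynomial $\prod_{l=0}^{n_1-k_i-1}(x-\alpha^l)$ ($\alpha$ primitive), $C^{(i)\perp}_{\rm RS}$ its dual (minimum distance $k_i+1$), and $\mathcal B(\cdot)$ is binary expansion w.r.t. a fixed self-dual basis of $\mathbb{F}_{2^m}/\mathbb{F}_2$. Vectors of $\mathbb{F}_4^{mn_1}$ are written as $(b_1,\dots,b_{n_1})$ with $b_l\in\mathbb{F}_4^m$ (one block per Reed–Solomon position). Let $B=B_1\oplus\cdots\oplus B_s$ and $B^\perp=B_1^\perp\oplus\cdots\oplus B_s^\perp$; an element $b=(\mathbf b_1,\dots,\mathbf b_s)$ with $\mathbf b_i=(b_{i,1},\dots,b_{i,n_1})$ is viewed as an $s\times n_1$ array over $\mathbb{F}_4^m$ with columns $c_l=(b_{1,l},\dots,b_{s,l})\in\mathbb{F}_4^{sm}$. Inner codes: $n_2\ge sm$, and self-orthogonal additive codes $C_s\subseteq C_{s-1}\subseteq\cdots\subseteq C_1\subseteq\mathbb{F}_4^{n_2}$ with $|C_j|=2^{n_2-jm}$, such that every vector of $C_j^\perp\setminus C_j$ has weight at least $\delta_jn_2$ (so $C_j$ defines an $[[n_2,jm,\delta_jn_2]]$ code $Q_2^{(j)}$). Let $g_i,h_i\in C_s^\perp$ ($1\le i\le sm$) satisfy $\langle g_i,h_l\rangle=\delta_{il}$, $\langle g_i,g_l\rangle=\langle h_i,h_l\rangle=0$, and for every $j$, $C_j^\perp=C_j+\mathrm{span}_{\mathbb{F}_2}\{g_i,h_i:1\le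 i\le jm\}$. Let $e_1,\dots,e_{sm}$ be the standard basis of $\mathbb{F}_4^{sm}$ and define the $\mathbb{F}_2$-linear map $\rho:\mathbb{F}_4^{sm}\to C_s^\perp/C_s$ by $\rho(\omega e_i)=g_i+C_s$, $\rho(\bar\omega e_i)=h_i+C_s$. The code: $C^\perp=\{(w_1,\dots,w_{n_1})\in(\mathbb{F}_4^{n_2})^{n_1}:\exists b\in B^\perp,\ w_l\in\rho(c_l)\ \forall l\}$ and $C$ is defined the same way with $b\in B$; $C\subseteq C^\perp$, $C^\perp$ is the trace dual of $C$, and $Q$ denotes the stabilizer code defined by $C$. *)

theory Defs
  imports "HOL-Analysis.Analysis" "HOL-Computational_Algebra.Polynomial"
begin

text \<open>F4 a b represents a + b*w, where w^2 = w + 1 (characteristic 2).\<close>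
datatype f4 = F4 bool bool

instantiation f4 :: comm_ring_1
begin
definition zero_f4 :: f4 where "zero_f4 = F4 False False"
definition one_f4 :: f4 where "one_f4 = F4 True False"
fun plus_f4 :: "f4 \<Rightarrow> f4 \<Rightarrow> f4" where
  "plus_f4 (F4 a b) (F4 c d) = F4 (a \<noteq> c) (b \<noteq> d)"
definition uminus_f4 :: "f4 \<Rightarrow> f4" where "uminus_f4 x = x"
definition minus_f4 :: "f4 \<Rightarrow> f4 \<Rightarrow> f4" where "minus_f4 x y = x + y"
fun times_f4 :: "f4 \<Rightarrow> f4 \<Rightarrow> f4" where
  "times_f4 (F4 a b) (F4 c d) =
     F4 ((a \<and> c) \<noteq> (b \<and> d)) (((a \<and> d) \<noteq> (b \<and> c)) \<noteq> (b \<and> d))"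
instance
proof
  fix x y z :: f4
  show "x + y + z = x + (y + z)" by (cases x; cases y; cases z) auto
  show "x + y = y + x" by (cases x; cases y) auto
  show "0 + x = x" by (cases x) (auto simp: zero_f4_def)
  show "- x + x = 0" by (cases x) (auto simp: zero_f4_def uminus_f4_def)
  show "x - y = x + - y" by (simp add: minus_f4_def uminus_f4_def)
  show "x * y * z = x * (y * z)" by (cases x; cases y; cases z) auto
  show "x * y = y * x" by (cases x; cases y) auto
  show "1 * x = x" by (cases x) (auto simp: one_f4_def)
  show "(x + y) * z = x * z + y * z" by (cases x; cases y; cases z) auto
  show "(0::f4) \<noteq> 1" by (simp add: zero_f4_def one_f4_def)
qed
end

definition f4_omega :: f4 where "f4_omega = F4 False True"
definition f4_omegabar :: f4 where "f4_omegabar = F4 True True"  \<comment> \<open>w^2 = w + 1\<close>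

text \<open>Conjugation x \<mapsto> x^2: (a + b w)^2 = (a+b) + b w.\<close>
fun f4_conj :: "f4 \<Rightarrow> f4" where "f4_conj (F4 a b) = F4 (a \<noteq> b) b"

text \<open>Absolute trace F4 \<rightarrow> F2, x + x^2; Tr(a + b w) = b.\<close>
fun f4_tr :: "f4 \<Rightarrow> bool" where "f4_tr (F4 a b) = b"

text \<open>Coefficients of x = a w + b wbar (every x has a unique such representation).\<close>
fun coef_omega :: "f4 \<Rightarrow> bool" where "coef_omega (F4 a b) = (a \<noteq> b)"
fun coef_omegabar :: "f4 \<Rightarrow> bool" where "coef_omegabar (F4 a b) = a"

definition f2_to_f4 :: "bool \<Rightarrow> f4" where "f2_to_f4 c = (if c then 1 else 0)"

text \<open>Vectors of F4^N are functions nat \<Rightarrow> f4 vanishing outside {0..<N}.\<close>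
definition vecs :: "nat \<Rightarrow> (nat \<Rightarrow> f4) set" where
  "vecs N = {v. \<forall>q\<ge>N. v q = 0}"

definition wt :: "nat \<Rightarrow> (nat \<Rightarrow> f4) \<Rightarrow> nat" where
  "wt N v = card {q \<in> {0..<N}. v q \<noteq> 0}"

text \<open>Trace inner product <u,v> = sum_q (u_q conj(v_q) + conj(u_q) v_q) in F2 (True = 1).\<close>
definition tip :: "nat \<Rightarrow> (nat \<Rightarrow> f4) \<Rightarrow> (nat \<Rightarrow> f4) \<Rightarrow> bool" where
  "tip N u v = odd (card {q \<in> {0..<N}. f4_tr (u q * f4_conj (v q))})"

definition tdual :: "nat \<Rightarrow> (nat \<Rightarrow> f4) set \<Rightarrow> (nat \<Rightarrow> f4) set" where
  "tdual N C = {v \<in> vecs N. \<forall>u \<in> C. \<not> tip N u v}"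

text \<open>Additive code = F2-subspace of F4^N.\<close>
definition additive :: "nat \<Rightarrow> (nat \<Rightarrow> f4) set \<Rightarrow> bool" where
  "additive N C \<longleftrightarrow> C \<subseteq> vecs N \<and> (\<lambda>q. 0) \<in> C \<and> (\<forall>u\<in>C. \<forall>v\<in>C. (\<lambda>q. u q + v q) \<in> C)"

definition self_orth :: "nat \<Rightarrow> (nat \<Rightarrow> f4) set \<Rightarrow> bool" where
  "self_orth N C \<longleftrightarrow> C \<subseteq> tdual N C"

text \<open>C + span_F2 {g_p, h_p : p < P}.\<close>
definition plus_span :: "(nat \<Rightarrow> f4) set \<Rightarrow> nat \<Rightarrow> (nat \<Rightarrow> nat \<Rightarrow> f4) \<Rightarrow> (nat \<Rightarrow> nat \<Rightarrow> f4)
    \<Rightarrow> (nat \<Rightarrow> f4) set" where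
  "plus_span C P g h = {(\<lambda>q. u q + (\<Sum>p<P. (if a p then g p q else 0) + (if c p then h p q else 0)))
       | u a c. u \<in> C}"

definition ftrace :: "nat \<Rightarrow> 'f::field \<Rightarrow> 'f" where
  "ftrace m x = (\<Sum>t<m. x ^ (2 ^ t))"

definition self_dual_basis :: "nat \<Rightarrow> (nat \<Rightarrow> 'f::field) \<Rightarrow> bool" where
  "self_dual_basis m \<beta> \<longleftrightarrow>
     (\<forall>x. \<exists>!cs. length cs = m \<and> x = (\<Sum>t<m. if cs ! t then \<beta> t else 0)) \<and>
     (\<forall>i<m. \<forall>j<m. ftrace m (\<beta> i * \<beta> j) = (if i = j then 1 else 0))"

definition bcoord :: "nat \<Rightarrow> (nat \<Rightarrow> 'f::field) \<Rightarrow> 'f \<Rightarrow> nat \<Rightarrow> bool" where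
  "bcoord m \<beta> x t = (if t < m then
      (THE cs. length cs = m \<and> x = (\<Sum>t<m. if cs ! t then \<beta> t else 0)) ! t else False)"

definition primitive_elem :: "nat \<Rightarrow> 'f::field \<Rightarrow> bool" where
  "primitive_elem n1 \<alpha> \<longleftrightarrow> \<alpha> ^ n1 = 1 \<and> (\<forall>t. 0 < t \<and> t < n1 \<longrightarrow> \<alpha> ^ t \<noteq> 1)"

definition rs_code :: "nat \<Rightarrow> nat \<Rightarrow> 'f::field \<Rightarrow> (nat \<Rightarrow> 'f) set" where
  "rs_code n1 k \<alpha> = {c. (\<forall>j\<ge>n1. c j = 0) \<and>
      (\<Prod>l<n1 - k. [:- (\<alpha> ^ l), 1:]) dvd (\<Sum>j<n1. monom (c j) j)}"

definition lin_dual :: "nat \<Rightarrow> (nat \<Rightarrow> 'f::field) set \<Rightarrow> (nat \<Rightarrow> 'f) set" where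
  "lin_dual n1 C = {d. (\<forall>j\<ge>n1. d j = 0) \<and> (\<forall>c\<in>C. (\<Sum>j<n1. c j * d j) = 0)}"

text \<open>Quantum RS set w B(S) + wbar B(S) in F4^{m n1}; an element is indexed by
  (l, t): RS position l < n1 and binary coordinate t < m.\<close>
definition qrs :: "nat \<Rightarrow> (nat \<Rightarrow> 'f::field) \<Rightarrow> (nat \<Rightarrow> 'f) set \<Rightarrow> (nat \<Rightarrow> nat \<Rightarrow> f4) set" where
  "qrs m \<beta> S = {(\<lambda>l t. f4_omega * f2_to_f4 (bcoord m \<beta> (u l) t)
                     + f4_omegabar * f2_to_f4 (bcoord m \<beta> (v l) t)) | u v. u \<in> S \<and> v \<in> S}"

text \<open>Column c_l in F4^{sm} of the array b (rows i = 1..s): coordinate (i-1)*m + t is b_{i,l,t}.\<close>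
definition col :: "nat \<Rightarrow> (nat \<Rightarrow> nat \<Rightarrow> nat \<Rightarrow> f4) \<Rightarrow> nat \<Rightarrow> nat \<Rightarrow> f4" where
  "col m b l p = b (p div m + 1) l (p mod m)"

text \<open>A representative of rho(c): rho(w e_p) = g_p, rho(wbar e_p) = h_p, F2-linear.\<close>
definition rho_rep :: "(nat \<Rightarrow> nat \<Rightarrow> f4) \<Rightarrow> (nat \<Rightarrow> nat \<Rightarrow> f4) \<Rightarrow> nat \<Rightarrow> (nat \<Rightarrow> f4) \<Rightarrow> nat \<Rightarrow> f4" where
  "rho_rep g h P c q = (\<Sum>p<P. (if coef_omega (c p) then g p q else 0)
                          + (if coef_omegabar (c p) then h p q else 0))"

text \<open>The concatenated code: words (w_1..w_{n1}) in (F4^{n2})^{n1} (w indexed by (l,q)),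
  with w_l \<in> rho(c_l) = rho_rep(c_l) + C_s for some b with rows b_i \<in> qrs(RS i).\<close>
definition gc_code :: "nat \<Rightarrow> (nat \<Rightarrow> 'f::field) \<Rightarrow> nat \<Rightarrow> nat \<Rightarrow> nat
    \<Rightarrow> (nat \<Rightarrow> (nat \<Rightarrow> 'f) set) \<Rightarrow> (nat \<Rightarrow> f4) set
    \<Rightarrow> (nat \<Rightarrow> nat \<Rightarrow> f4) \<Rightarrow> (nat \<Rightarrow> nat \<Rightarrow> f4) \<Rightarrow> (nat \<Rightarrow> nat \<Rightarrow> f4) set" where
  "gc_code m \<beta> s n1 n2 RS Cs g h =
     {w. (\<forall>l q. n1 \<le> l \<or> n2 \<le> q \<longrightarrow> w l q = 0) \<and>
         (\<exists>b. (\<forall>i\<in>{1..s}. b i \<in> qrs m \<beta> (RS i)) \<and>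
              (\<forall>l<n1. \<exists>u\<in>Cs. \<forall>q. w l q = rho_rep g h (s * m) (col m b l) q + u q))}"

definition wt2 :: "nat \<Rightarrow> nat \<Rightarrow> (nat \<Rightarrow> nat \<Rightarrow> f4) \<Rightarrow> nat" where
  "wt2 n1 n2 w = card {(l, q). l < n1 \<and> q < n2 \<and> w l q \<noteq> 0}"

end

theory Submission
  imports Defs
begin

text \<open>Let w \<in> C^\<perp> - C come from an outer array b with rows b_i \<in> B_i^\<perp>. As w \<notin> C, some row
  of b is nonzero; let J be the last one. Row J is the binary expansion of nonzero words of the
  dual Reed-Solomon code, so by the Vandermonde argument it is nonzero in at least k_J + 1
  columns l. In such a column c_l vanishes beyond the J-th block of m coordinates, so
  w_l = \<rho>(c_l) + u lies in C_J + span {g_p, h_p : p < J m} = C_J^\<perp>, while the pairing of w_l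
  with g_p or h_p for a nonzero coordinate p of block J is nonzero, so w_l \<notin> C_J and
  wt(w_l) \<ge> \<delta>_J n_2. Summing over these columns gives wt(w) \<ge> \<delta>_J n_2 (k_J + 1). This bounds the
  weight by the term of one particular J.\<close>

lemma f4_tr_add_mult: "f4_tr ((x + y) * z) = (f4_tr (x * z) \<noteq> f4_tr (y * z))"
  by (cases x; cases y; cases z) auto

lemma f4_tr_mult_conj_commute: "f4_tr (x * f4_conj y) = f4_tr (y * f4_conj x)"
  by (cases x; cases y) auto

lemma f4_tr_zero: "f4_tr 0 = False"
  by (simp add: zero_f4_def)

lemma f4_nonzero_coef: "(x::f4) \<noteq> 0 \<Longrightarrow> coef_omega x \<or> coef_omegabar x"
  by (cases x) (auto simp: zero_f4_def)

lemma coef_omega_zero [simp]: "coef_omega 0 = False" "coef_omegabar 0 = False"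
  by (auto simp: zero_f4_def)

lemma f4_omega_combination_eq_zero_iff:
  "f4_omega * f2_to_f4 a + f4_omegabar * f2_to_f4 b = 0 \<longleftrightarrow> \<not> a \<and> \<not> b"
  by (cases a; cases b)
    (auto simp: f4_omega_def f4_omegabar_def f2_to_f4_def zero_f4_def one_f4_def)

lemma odd_card_filter_xor:
  "finite X \<Longrightarrow>
     odd (card {q \<in> X. P q \<noteq> Q q}) = (odd (card {q \<in> X. P q}) \<noteq> odd (card {q \<in> X. Q q}))"
proof (induction X rule: finite_induct)
  case empty
  then show ?case by simp
next
  case (insert x X)
  have "card {q \<in> insert x X. R q} = card {q \<in> X. R q} + of_bool (R x)" for R
    using insert.hyps by (cases "R x") (auto simp: insert_compr[symmetric] Collect_conj_eq)
  then show ?case using insert.IH by auto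
qed

lemma tip_add_left: "tip N (\<lambda>q. x q + y q) v = (tip N x v \<noteq> tip N y v)"
  unfolding tip_def f4_tr_add_mult by (rule odd_card_filter_xor) simp

lemma tip_commute: "tip N u v = tip N v u"
  unfolding tip_def by (simp add: f4_tr_mult_conj_commute)

lemma tip_zero_left: "\<not> tip N (\<lambda>q. 0) v"
  unfolding tip_def by (simp add: f4_tr_zero)

lemma tip_if_left: "tip N (\<lambda>q. if a then x q else 0) v = (a \<and> tip N x v)"
  by (cases a) (simp_all add: tip_zero_left)

lemma tip_sum_left:
  fixes P :: nat
  shows "tip N (\<lambda>q. \<Sum>p<P. G p q) v = odd (card {p. p < P \<and> tip N (G p) v})"
proof (induction P)
  case 0
  then show ?case using tip_zero_left by simp
next
  case (Suc P)
  have "{p. p < Suc P \<and> tip N (G p) v}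
          = {p. p < P \<and> tip N (G p) v} \<union> (if tip N (G P) v then {P} else {})"
    by (auto simp: less_Suc_eq)
  then have "card {p. p < Suc P \<and> tip N (G p) v}
               = card {p. p < P \<and> tip N (G p) v} + of_bool (tip N (G P) v)"
    by (auto simp: card_insert_if)
  then show ?case
    using tip_add_left[of N "\<lambda>q. \<Sum>p<P. G p q" "G P" v] Suc.IH by auto
qed

section \<open>Minimum distance of dual Reed-Solomon codes\<close>

lemma prod_linear_factors_dvd:
  fixes p :: "'a::idom poly"
  assumes "finite A" and "\<forall>x\<in>A. poly p x = 0"
  shows "(\<Prod>x\<in>A. [:- x, 1:]) dvd p"
  using assms
proof (induction A arbitrary: p rule: finite_induct)
  case empty
  then show ?case by simp
next
  case (insert x A)
  have "(\<Prod>y\<in>A. [:- y, 1:]) dvd p"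
    using insert by simp
  then obtain q where q: "p = (\<Prod>y\<in>A. [:- y, 1:]) * q"
    by (elim dvdE)
  have "poly (\<Prod>y\<in>A. [:- y, 1:]) x \<noteq> 0"
    using insert.hyps by (auto simp: poly_prod)
  then have "poly q x = 0"
    using insert.prems q by simp
  then have "(\<Prod>y\<in>A. [:- y, 1:]) * [:- x, 1:] dvd (\<Prod>y\<in>A. [:- y, 1:]) * q"
    by (simp only: poly_eq_0_iff_dvd mult_dvd_mono dvd_refl)
  then show ?case
    using insert.hyps q by (simp add: mult.commute)
qed

text \<open>Subtracting x j0 times the power sum of order t from the one of order t + 1 eliminates
  the node x j0 and leaves a relation of the same shape on the remaining nodes.\<close>
lemma power_sums_vanish_imp_zero:
  fixes x a :: "nat \<Rightarrow> 'a::field"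
  assumes "finite S" "card S \<le> n" "inj_on x S" "\<forall>j\<in>S. x j \<noteq> 0"
    and "\<forall>t\<in>{1..n}. (\<Sum>j\<in>S. a j * x j ^ t) = 0"
  shows "\<forall>j\<in>S. a j = 0"
  using assms
proof (induction S arbitrary: a n rule: finite_induct)
  case empty
  then show ?case by simp
next
  case (insert j0 S)
  define a' where "a' j = a j * (x j - x j0)" for j
  have n: "n \<ge> 1" "card S \<le> n - 1"
    using insert by auto
  have sums: "a j0 * x j0 ^ t + (\<Sum>j\<in>S. a j * x j ^ t) = 0" if "t \<in> {1..n}" for t
    using insert that by simp
  have sums': "(\<Sum>j\<in>S. a j * x j ^ t) = - (a j0 * x j0 ^ t)" if "t \<in> {1..n}" for t
    using sums[OF that] by (simp only: add_eq_0_iff)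
  have "(\<Sum>j\<in>S. a' j * x j ^ t) = 0" if t: "t \<in> {1..n - 1}" for t
  proof -
    have "t \<in> {1..n}" "Suc t \<in> {1..n}"
      using t n by auto
    note sums' = sums'[OF this(1)] sums'[OF this(2)]
    have "(\<Sum>j\<in>S. a' j * x j ^ t) = (\<Sum>j\<in>S. a j * x j ^ Suc t - x j0 * (a j * x j ^ t))"
      by (rule sum.cong) (simp_all add: a'_def algebra_simps)
    also have "\<dots> = (\<Sum>j\<in>S. a j * x j ^ Suc t) - x j0 * (\<Sum>j\<in>S. a j * x j ^ t)"
      by (simp add: sum_subtractf sum_distrib_left)
    also have "\<dots> = - (a j0 * x j0 ^ Suc t) - x j0 * (- (a j0 * x j0 ^ t))"
      by (simp only: sums')
    also have "\<dots> = 0"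
      by (simp add: algebra_simps)
    finally show ?thesis .
  qed
  then have "\<forall>j\<in>S. a' j = 0"
    using insert.IH[of "n - 1" a'] insert.prems n by (auto simp: inj_on_insert)
  then have aS: "\<forall>j\<in>S. a j = 0"
    using insert by (auto simp: a'_def inj_on_def)
  then have "a j0 * x j0 = 0"
    using sums[of 1] n by simp
  then show ?case
    using aS insert.prems by simp
qed

lemma primitive_elem_power_inj_on:
  assumes "primitive_elem n1 \<alpha>"
  shows "inj_on (\<lambda>j. \<alpha> ^ j) {..<n1}"
proof -
  have "\<alpha> ^ i \<noteq> \<alpha> ^ j" if "i < j" "j < n1" for i j
  proof
    assume eq: "\<alpha> ^ i = \<alpha> ^ j"
    have "\<alpha> \<noteq> 0"
      using assms that by (auto simp: primitive_elem_def zero_power)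
    have "\<alpha> ^ i * \<alpha> ^ (j - i) = \<alpha> ^ j"
      using that by (simp flip: power_add)
    then have "\<alpha> ^ i * \<alpha> ^ (j - i) = \<alpha> ^ i * 1"
      using eq by simp
    then have "\<alpha> ^ (j - i) = 1"
      using \<open>\<alpha> \<noteq> 0\<close> by simp
    then show False
      using assms that by (simp add: primitive_elem_def)
  qed
  then show ?thesis
    by (intro inj_onI) (metis lessThan_iff linorder_neqE_nat)
qed

text \<open>At each root \<alpha>^l of the generator polynomial this word evaluates to a geometric sum of
  ratio \<alpha>^(t+l) \<noteq> 1, which vanishes because (\<alpha>^(t+l))^n1 = 1.\<close>
lemma rs_code_power_vector:
  assumes prim: "primitive_elem n1 \<alpha>" and "k < n1" and t: "1 \<le> t" "t \<le> k"
  shows "(\<lambda>j. if j < n1 then \<alpha> ^ (t * j) else 0) \<in> rs_code n1 k \<alpha>"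
proof -
  let ?c = "\<lambda>j. if j < n1 then \<alpha> ^ (t * j) else 0"
  have "poly (\<Sum>j<n1. monom (?c j) j) (\<alpha> ^ l) = 0" if l: "l < n1 - k" for l
  proof -
    have "(\<alpha> ^ (t + l)) ^ n1 = (\<alpha> ^ n1) ^ (t + l)"
      by (simp only: power_mult[symmetric] mult.commute)
    then have "(\<alpha> ^ (t + l)) ^ n1 = 1"
      using prim by (simp add: primitive_elem_def)
    moreover have "\<alpha> ^ (t + l) \<noteq> 1"
      using prim t l by (simp add: primitive_elem_def)
    ultimately have "(\<Sum>j<n1. (\<alpha> ^ (t + l)) ^ j) = 0"
      by (simp add: geometric_sum)
    moreover have "?c j * (\<alpha> ^ l) ^ j = (\<alpha> ^ (t + l)) ^ j" if "j < n1" for j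
      using that by (simp add: power_add power_mult_distrib flip: power_mult)
    ultimately show ?thesis
      by (simp add: poly_sum poly_monom)
  qed
  moreover have "(\<Prod>l<n1 - k. [:- (\<alpha> ^ l), 1:]) = (\<Prod>x\<in>(\<lambda>l. \<alpha> ^ l) ` {..<n1 - k}. [:- x, 1:])"
    using inj_on_subset[OF primitive_elem_power_inj_on[OF prim]]
    by (simp add: prod.reindex)
  ultimately show ?thesis
    unfolding rs_code_def by (auto intro: prod_linear_factors_dvd)
qed

lemma lin_dual_rs_code_weight:
  assumes prim: "primitive_elem n1 \<alpha>" and "k < n1"
    and d: "d \<in> lin_dual n1 (rs_code n1 k \<alpha>)" and "d \<noteq> (\<lambda>_. 0)"
  shows "k + 1 \<le> card {j. j < n1 \<and> d j \<noteq> 0}"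
proof (rule ccontr)
  define S where "S = {j. j < n1 \<and> d j \<noteq> 0}"
  assume "\<not> k + 1 \<le> card {j. j < n1 \<and> d j \<noteq> 0}"
  then have "card S \<le> k"
    by (simp add: S_def)
  have "(\<Sum>j\<in>S. d j * (\<alpha> ^ j) ^ t) = 0" if t: "t \<in> {1..k}" for t
  proof -
    have "(\<Sum>j\<in>S. d j * (\<alpha> ^ j) ^ t) = (\<Sum>j<n1. (if j < n1 then \<alpha> ^ (t * j) else 0) * d j)"
    proof (rule sum.mono_neutral_cong_left)
      show "\<forall>j\<in>{..<n1} - S. (if j < n1 then \<alpha> ^ (t * j) else 0) * d j = 0"
        by (simp add: S_def)
      show "d j * (\<alpha> ^ j) ^ t = (if j < n1 then \<alpha> ^ (t * j) else 0) * d j" if "j \<in> S" for j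
        using that by (simp add: S_def mult.commute flip: power_mult)
    qed (auto simp: S_def)
    also have "\<dots> = 0"
    proof -
      have "\<forall>c\<in>rs_code n1 k \<alpha>. (\<Sum>j<n1. c j * d j) = 0"
        using d by (simp add: lin_dual_def)
      moreover have "(\<lambda>j. if j < n1 then \<alpha> ^ (t * j) else 0) \<in> rs_code n1 k \<alpha>"
        using rs_code_power_vector[OF prim \<open>k < n1\<close>] t by simp
      ultimately show ?thesis
        by (rule bspec)
    qed
    finally show ?thesis .
  qed
  moreover have "inj_on (\<lambda>j. \<alpha> ^ j) S"
    using primitive_elem_power_inj_on[OF prim] by (rule inj_on_subset) (auto simp: S_def)
  moreover have "\<forall>j\<in>S. \<alpha> ^ j \<noteq> 0"
    using prim \<open>k < n1\<close> by (auto simp: primitive_elem_def zero_power)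
  moreover have "finite S"
    by (simp add: S_def)
  ultimately have "\<forall>j\<in>S. d j = 0"
    using power_sums_vanish_imp_zero[of S k "\<lambda>j. \<alpha> ^ j" d] \<open>card S \<le> k\<close> by blast
  moreover obtain j where "d j \<noteq> 0"
    using \<open>d \<noteq> (\<lambda>_. 0)\<close> by auto
  moreover have "j < n1"
    using d \<open>d j \<noteq> 0\<close> unfolding lin_dual_def by (metis (mono_tags) mem_Collect_eq not_less)
  ultimately show False
    by (simp add: S_def)
qed

lemma bcoord_eq_nth:
  assumes "self_dual_basis m \<beta>" and "length cs = m"
    and "x = (\<Sum>t<m. if cs ! t then \<beta> t else 0)" and "t < m"
  shows "bcoord m \<beta> x t = cs ! t"
proof -
  have "\<exists>!cs. length cs = m \<and> x = (\<Sum>t<m. if cs ! t then \<beta> t else 0)"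
    using assms(1) by (simp add: self_dual_basis_def)
  then have "(THE cs. length cs = m \<and> x = (\<Sum>t<m. if cs ! t then \<beta> t else 0)) = cs"
    using assms(2,3) by (intro the1_equality) simp_all
  then show ?thesis
    using assms(4) by (simp add: bcoord_def)
qed

lemma bcoord_zero:
  assumes "self_dual_basis m \<beta>"
  shows "\<not> bcoord m \<beta> (0::'f::field) t"
proof (cases "t < m")
  case True
  have "(0::'f) = (\<Sum>t<m. if replicate m False ! t then \<beta> t else 0)"
    by (intro sum.neutral[symmetric]) simp
  then show ?thesis
    using bcoord_eq_nth[OF assms, of "replicate m False"] True by simp
qed (simp add: bcoord_def)

lemma bcoord_nonzero_ex:
  assumes "self_dual_basis m \<beta>" and "(x::'f::field) \<noteq> 0"
  shows "\<exists>t<m. bcoord m \<beta> x t"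
proof -
  have "\<exists>!cs. length cs = m \<and> x = (\<Sum>t<m. if cs ! t then \<beta> t else 0)"
    using assms(1) by (simp add: self_dual_basis_def)
  then obtain cs where cs: "length cs = m" "x = (\<Sum>t<m. if cs ! t then \<beta> t else 0)"
    by blast
  have "\<exists>t<m. cs ! t"
  proof (rule ccontr)
    assume "\<not> (\<exists>t<m. cs ! t)"
    then have "x = 0"
      using cs(2) by simp
    then show False
      using assms(2) by simp
  qed
  then show ?thesis
    using bcoord_eq_nth[OF assms(1) cs] by auto
qed

lemma zero_mem_qrs:
  assumes "self_dual_basis m \<beta>" and "(\<lambda>_. 0) \<in> S"
  shows "(\<lambda>l t. 0) \<in> qrs m \<beta> S"
proof -
  have "(\<lambda>l t. 0) = (\<lambda>l t. f4_omega * f2_to_f4 (bcoord m \<beta> ((\<lambda>_. 0) l) t)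
                          + f4_omegabar * f2_to_f4 (bcoord m \<beta> ((\<lambda>_. 0) l) t))"
    by (simp add: bcoord_zero[OF assms(1)] f2_to_f4_def)
  then show ?thesis
    using assms(2) unfolding qrs_def by (intro CollectI exI conjI)
qed

lemma qrs_nonzero_witness:
  assumes sdb: "self_dual_basis m \<beta>" and b: "b \<in> qrs m \<beta> S" and "b \<noteq> (\<lambda>l t. 0)"
  obtains d where "d \<in> S" "d \<noteq> (\<lambda>_. 0)" "\<And>l. d l \<noteq> 0 \<Longrightarrow> \<exists>t<m. b l t \<noteq> 0"
proof -
  obtain u v where uv: "u \<in> S" "v \<in> S"
    and b_eq: "\<And>l t. b l t = f4_omega * f2_to_f4 (bcoord m \<beta> (u l) t)
                              + f4_omegabar * f2_to_f4 (bcoord m \<beta> (v l) t)"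
    using b unfolding qrs_def by blast
  have supp: "\<exists>t<m. b l t \<noteq> 0" if "d l \<noteq> 0" "d = u \<or> d = v" for d l
  proof -
    obtain t where "t < m" "bcoord m \<beta> (d l) t"
      using bcoord_nonzero_ex[OF sdb \<open>d l \<noteq> 0\<close>] by blast
    then show ?thesis
      using that(2) by (auto simp: b_eq f4_omega_combination_eq_zero_iff)
  qed
  have "u \<noteq> (\<lambda>_. 0) \<or> v \<noteq> (\<lambda>_. 0)"
  proof (rule ccontr)
    assume "\<not> (u \<noteq> (\<lambda>_. 0) \<or> v \<noteq> (\<lambda>_. 0))"
    then have "b l t = 0" for l t
      by (simp add: b_eq bcoord_zero[OF sdb] f2_to_f4_def)
    then show False
      using \<open>b \<noteq> (\<lambda>l t. 0)\<close> by blast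
  qed
  then show ?thesis
    using that[of u] that[of v] uv supp by blast
qed

lemma qrs_lin_dual_rs_code_support:
  assumes "primitive_elem n1 \<alpha>" "k < n1" "self_dual_basis m \<beta>"
    and "b \<in> qrs m \<beta> (lin_dual n1 (rs_code n1 k \<alpha>))" and "b \<noteq> (\<lambda>l t. 0)"
  shows "k + 1 \<le> card {l. l < n1 \<and> (\<exists>t<m. b l t \<noteq> 0)}"
proof -
  obtain d where d: "d \<in> lin_dual n1 (rs_code n1 k \<alpha>)" "d \<noteq> (\<lambda>_. 0)"
    and supp: "\<And>l. d l \<noteq> 0 \<Longrightarrow> \<exists>t<m. b l t \<noteq> 0"
    using qrs_nonzero_witness[OF assms(3-5)] by blast
  have "k + 1 \<le> card {j. j < n1 \<and> d j \<noteq> 0}"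
    using lin_dual_rs_code_weight[OF assms(1,2) d] .
  also have "\<dots> \<le> card {l. l < n1 \<and> (\<exists>t<m. b l t \<noteq> 0)}"
    using supp by (intro card_mono) auto
  finally show ?thesis .
qed

lemma plus_span_memI:
  "u \<in> C \<Longrightarrow> (\<lambda>q. u q + (\<Sum>p<P. (if a p then g p q else 0) + (if c p then h p q else 0)))
                 \<in> plus_span C P g h"
  unfolding plus_span_def by blast

lemma generator_mem_plus_span:
  assumes "(\<lambda>q. 0) \<in> C" and "p < P"
  shows "g p \<in> plus_span C P g h" and "h p \<in> plus_span C P g h"
proof -
  have eqs: "g p = (\<lambda>q. 0 + (\<Sum>p'<P. (if p' = p then g p' q else 0) + (if False then h p' q else 0)))"
    "h p = (\<lambda>q. 0 + (\<Sum>p'<P. (if False then g p' q else 0) + (if p' = p then h p' q else 0)))"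
    using assms(2) by (simp_all add: fun_eq_iff)
  show "g p \<in> plus_span C P g h"
    by (subst eqs(1)) (rule plus_span_memI[OF assms(1)])
  show "h p \<in> plus_span C P g h"
    by (subst eqs(2)) (rule plus_span_memI[OF assms(1)])
qed

lemma rho_rep_add_mem_plus_span:
  assumes "u \<in> C"
  shows "(\<lambda>q. rho_rep g h P c q + u q) \<in> plus_span C P g h"
  using plus_span_memI[OF assms, where a="\<lambda>p. coef_omega (c p)" and c="\<lambda>p. coef_omegabar (c p)"]
  by (simp add: rho_rep_def add.commute)

lemma tip_rho_rep_generator:
  assumes symp: "\<forall>p<P. \<forall>p'<P. tip N (g p) (h p') = (p = p')
                      \<and> \<not> tip N (g p) (g p') \<and> \<not> tip N (h p) (h p')"
    and "p0 < P"
  shows "tip N (rho_rep g h P c) (h p0) = coef_omega (c p0)"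
    and "tip N (rho_rep g h P c) (g p0) = coef_omegabar (c p0)"
proof -
  define G where "G p q = (if coef_omega (c p) then g p q else 0)
                            + (if coef_omegabar (c p) then h p q else 0)" for p q
  have rho: "rho_rep g h P c = (\<lambda>q. \<Sum>p<P. G p q)"
    by (simp add: fun_eq_iff rho_rep_def G_def)
  have tip_G: "tip N (G p) v
                 = ((coef_omega (c p) \<and> tip N (g p) v) \<noteq> (coef_omegabar (c p) \<and> tip N (h p) v))"
    for p v
  proof -
    have "G p = (\<lambda>q. (if coef_omega (c p) then g p q else 0)
                       + (if coef_omegabar (c p) then h p q else 0))"
      by (simp add: fun_eq_iff G_def)
    then show ?thesis
      by (simp only: tip_add_left tip_if_left)
  qed
  have "tip N (G p) (h p0) \<longleftrightarrow> p = p0 \<and> coef_omega (c p0)" if "p < P" for p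
    using symp[rule_format, OF that \<open>p0 < P\<close>] by (auto simp: tip_G)
  then have "{p. p < P \<and> tip N (G p) (h p0)} = (if coef_omega (c p0) then {p0} else {})"
    using \<open>p0 < P\<close> by auto
  then show "tip N (rho_rep g h P c) (h p0) = coef_omega (c p0)"
    by (simp add: rho tip_sum_left)
  have "tip N (G p) (g p0) \<longleftrightarrow> p = p0 \<and> coef_omegabar (c p0)" if "p < P" for p
    using symp[rule_format, OF that \<open>p0 < P\<close>] symp[rule_format, OF \<open>p0 < P\<close> that]
      tip_commute[of N "h p" "g p0"] by (auto simp: tip_G)
  then have "{p. p < P \<and> tip N (G p) (g p0)} = (if coef_omegabar (c p0) then {p0} else {})"
    using \<open>p0 < P\<close> by auto
  then show "tip N (rho_rep g h P c) (g p0) = coef_omegabar (c p0)"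
    by (simp add: rho tip_sum_left)
qed

lemma rho_rep_add_mem_tdual_diff:
  assumes span: "tdual N C = plus_span C P g h" and zero: "(\<lambda>q. 0) \<in> C" and u: "u \<in> C"
    and symp: "\<forall>p<P. \<forall>p'<P. tip N (g p) (h p') = (p = p')
                      \<and> \<not> tip N (g p) (g p') \<and> \<not> tip N (h p) (h p')"
    and "p0 < P" and "c p0 \<noteq> 0"
  shows "(\<lambda>q. rho_rep g h P c q + u q) \<in> tdual N C - C"
proof
  let ?w = "\<lambda>q. rho_rep g h P c q + u q"
  show "?w \<in> tdual N C"
    using span rho_rep_add_mem_plus_span[OF u] by simp
  have gh: "g p0 \<in> tdual N C" "h p0 \<in> tdual N C"
    using span generator_mem_plus_span[OF zero \<open>p0 < P\<close>] by simp_all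
  have tip_w: "tip N ?w v = tip N (rho_rep g h P c) v" if "v \<in> tdual N C" for v
    using that u by (simp add: tip_add_left tdual_def)
  show "?w \<notin> C"
  proof
    assume "?w \<in> C"
    then have "\<not> tip N ?w (g p0)" "\<not> tip N ?w (h p0)"
      using gh by (auto simp: tdual_def)
    then show False
      using tip_w[OF gh(1)] tip_w[OF gh(2)] tip_rho_rep_generator[OF symp \<open>p0 < P\<close>]
        f4_nonzero_coef[OF \<open>c p0 \<noteq> 0\<close>] by simp
  qed
qed

lemma rho_rep_eq_if_zero_above:
  assumes "P \<le> Q" and "\<And>p. P \<le> p \<Longrightarrow> p < Q \<Longrightarrow> c p = 0"
  shows "rho_rep g h Q c = rho_rep g h P c"
proof
  fix q
  show "rho_rep g h Q c q = rho_rep g h P c q"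
    unfolding rho_rep_def using assms by (intro sum.mono_neutral_right) auto
qed

section \<open>Weight of the concatenated code\<close>

lemma decreasing_chain_subset:
  assumes chain: "\<forall>j\<in>{1..<s}. C (Suc j) \<subseteq> C j" and "1 \<le> i" "i \<le> j" "j \<le> s"
  shows "C j \<subseteq> C i"
  using \<open>i \<le> j\<close> \<open>j \<le> s\<close>
proof (induction j rule: dec_induct)
  case base
  then show ?case by simp
next
  case (step n)
  then have "C (Suc n) \<subseteq> C n"
    using chain \<open>1 \<le> i\<close> by auto
  with step show ?case
    by auto
qed

lemma column_weight_ge:
  assumes J: "J \<in> {1..s}" and t: "t < m"
    and nested: "\<forall>j\<in>{1..<s}. Cin (Suc j) \<subseteq> Cin j"
    and zero: "(\<lambda>q. 0) \<in> Cin J"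
    and span: "tdual n2 (Cin J) = plus_span (Cin J) (J * m) g h"
    and symp: "\<forall>p<s * m. \<forall>p'<s * m. tip n2 (g p) (h p') = (p = p')
                      \<and> \<not> tip n2 (g p) (g p') \<and> \<not> tip n2 (h p) (h p')"
    and dist: "\<forall>v\<in>tdual n2 (Cin J) - Cin J. \<delta> * real n2 \<le> real (wt n2 v)"
    and u: "u \<in> Cin s"
    and above: "\<forall>i\<in>{J<..s}. \<forall>t. b i l t = 0"
    and nz: "b J l t \<noteq> 0"
  shows "\<delta> * real n2 \<le> real (wt n2 (\<lambda>q. rho_rep g h (s * m) (col m b l) q + u q))"
proof -
  have "u \<in> Cin J"
    using u decreasing_chain_subset[OF nested] J by auto
  have Jm: "J * m \<le> s * m"
    using J by simp
  have "rho_rep g h (s * m) (col m b l) = rho_rep g h (J * m) (col m b l)"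
  proof (rule rho_rep_eq_if_zero_above[OF Jm])
    fix p assume "J * m \<le> p" "p < s * m"
    then have "J \<le> p div m" "p div m < s"
      using t div_le_mono[of "J * m" p m] by (simp_all add: less_mult_imp_div_less)
    then show "col m b l p = 0"
      using above by (simp add: col_def)
  qed
  moreover have "(J - 1) * m + t < J * m"
    using J t by (cases J) auto
  moreover have "col m b l ((J - 1) * m + t) = b J l t"
    using J t by (simp add: col_def)
  moreover have "\<forall>p<J * m. \<forall>p'<J * m. tip n2 (g p) (h p') = (p = p')
                      \<and> \<not> tip n2 (g p) (g p') \<and> \<not> tip n2 (h p) (h p')"
  proof (intro allI impI)
    fix p p' assume "p < J * m" "p' < J * m"
    then have "p < s * m" "p' < s * m"
      using Jm by linarith+
    then show "tip n2 (g p) (h p') = (p = p') \<and> \<not> tip n2 (g p) (g p') \<and> \<not> tip n2 (h p) (h p')"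
      using symp by blast
  qed
  ultimately have "(\<lambda>q. rho_rep g h (s * m) (col m b l) q + u q) \<in> tdual n2 (Cin J) - Cin J"
    using rho_rep_add_mem_tdual_diff[OF span zero \<open>u \<in> Cin J\<close>] nz by simp
  then show ?thesis
    using dist by blast
qed

lemma gc_code_diff_top_row:
  assumes sdb: "self_dual_basis m \<beta>" and zero: "\<forall>i\<in>{1..s}. (\<lambda>_. 0) \<in> S i"
    and w: "w \<in> gc_code m \<beta> s n1 n2 S' Cs g h - gc_code m \<beta> s n1 n2 S Cs g h"
  obtains b J where "\<forall>i\<in>{1..s}. b i \<in> qrs m \<beta> (S' i)"
    and "\<forall>l<n1. \<exists>u\<in>Cs. \<forall>q. w l q = rho_rep g h (s * m) (col m b l) q + u q"
    and "J \<in> {1..s}" and "b J \<noteq> (\<lambda>l t. 0)" and "\<forall>i\<in>{J<..s}. b i = (\<lambda>l t. 0)"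
proof -
  have wz: "\<forall>l q. n1 \<le> l \<or> n2 \<le> q \<longrightarrow> w l q = 0"
    and "\<exists>b. (\<forall>i\<in>{1..s}. b i \<in> qrs m \<beta> (S' i))
             \<and> (\<forall>l<n1. \<exists>u\<in>Cs. \<forall>q. w l q = rho_rep g h (s * m) (col m b l) q + u q)"
    using w by (simp_all add: gc_code_def)
  then obtain b where rows: "\<forall>i\<in>{1..s}. b i \<in> qrs m \<beta> (S' i)"
    and cols: "\<forall>l<n1. \<exists>u\<in>Cs. \<forall>q. w l q = rho_rep g h (s * m) (col m b l) q + u q"
    by blast
  define I where "I = {i \<in> {1..s}. b i \<noteq> (\<lambda>l t. 0)}"
  have "I \<noteq> {}"
  proof
    assume "I = {}"
    then have "\<forall>i\<in>{1..s}. b i \<in> qrs m \<beta> (S i)"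
      using zero_mem_qrs[OF sdb] zero by (auto simp: I_def)
    then have "w \<in> gc_code m \<beta> s n1 n2 S Cs g h"
      unfolding gc_code_def mem_Collect_eq using wz cols by (intro conjI exI[of _ b]) auto
    then show False
      using w by simp
  qed
  define J where "J = Max I"
  have "finite I"
    by (simp add: I_def)
  then have "J \<in> I"
    using \<open>I \<noteq> {}\<close> by (simp add: J_def)
  have above: "b i = (\<lambda>l t. 0)" if "i \<in> {J<..s}" for i
  proof (rule ccontr)
    assume "b i \<noteq> (\<lambda>l t. 0)"
    then have "i \<in> I"
      using that by (simp add: I_def)
    then have "i \<le> J"
      using Max_ge[OF \<open>finite I\<close>] by (simp add: J_def)
    then show False
      using that by simp
  qed
  show ?thesis
  proof (rule that[OF rows cols])
    show "J \<in> {1..s}" "b J \<noteq> (\<lambda>l t. 0)"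
      using \<open>J \<in> I\<close> by (simp_all add: I_def)
    show "\<forall>i\<in>{J<..s}. b i = (\<lambda>l t. 0)"
      using above by blast
  qed
qed

lemma wt2_eq_sum_wt: "wt2 n1 n2 w = (\<Sum>l<n1. wt n2 (w l))"
proof -
  have "{(l, q). l < n1 \<and> q < n2 \<and> w l q \<noteq> 0} = Sigma {..<n1} (\<lambda>l. {q \<in> {0..<n2}. w l q \<noteq> 0})"
    by auto
  then show ?thesis
    unfolding wt2_def wt_def by simp
qed

lemma wt2_ge_card_mult:
  fixes x :: real
  assumes "L \<subseteq> {..<n1}" and "\<forall>l\<in>L. x \<le> real (wt n2 (w l))" and "K \<le> card L"
  shows "real K * x \<le> real (wt2 n1 n2 w)"
proof (cases "0 \<le> x")
  case True
  have "real K * x \<le> real (card L) * x"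
    using assms(3) True by (intro mult_right_mono) auto
  also have "\<dots> = (\<Sum>l\<in>L. x)"
    by simp
  also have "\<dots> \<le> (\<Sum>l\<in>L. real (wt n2 (w l)))"
    using assms(2) by (intro sum_mono) auto
  also have "\<dots> \<le> (\<Sum>l<n1. real (wt n2 (w l)))"
    using assms(1) by (intro sum_mono2) auto
  also have "\<dots> = real (wt2 n1 n2 w)"
    by (simp add: wt2_eq_sum_wt)
  finally show ?thesis .
next
  case False
  then have "real K * x \<le> 0"
    by (simp add: mult_nonneg_nonpos)
  then show ?thesis
    by simp
qed

lemma gc_code_dual_diff_weight:
  fixes \<delta> :: "nat \<Rightarrow> real"
  assumes prim: "primitive_elem n1 \<alpha>" and k_lt: "\<forall>i\<in>{1..s}. k i < n1"
    and sdb: "self_dual_basis m \<beta>"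
    and nested: "\<forall>j\<in>{1..<s}. Cin (Suc j) \<subseteq> Cin j"
    and zero: "\<forall>j\<in>{1..s}. (\<lambda>q. 0) \<in> Cin j"
    and span: "\<forall>j\<in>{1..s}. tdual n2 (Cin j) = plus_span (Cin j) (j * m) g h"
    and symp: "\<forall>p<s * m. \<forall>p'<s * m. tip n2 (g p) (h p') = (p = p')
                      \<and> \<not> tip n2 (g p) (g p') \<and> \<not> tip n2 (h p) (h p')"
    and dist: "\<forall>j\<in>{1..s}. \<forall>v \<in> tdual n2 (Cin j) - Cin j. real (wt n2 v) \<ge> \<delta> j * real n2"
    and w: "w \<in> gc_code m \<beta> s n1 n2 (\<lambda>i. lin_dual n1 (rs_code n1 (k i) \<alpha>)) (Cin s) g h
               - gc_code m \<beta> s n1 n2 (\<lambda>i. rs_code n1 (k i) \<alpha>) (Cin s) g h"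
  shows "\<exists>J\<in>{1..s}. \<delta> J * real n2 * real (k J + 1) \<le> real (wt2 n1 n2 w)"
proof -
  have "\<forall>i\<in>{1..s}. (\<lambda>_. 0) \<in> rs_code n1 (k i) \<alpha>"
    by (simp add: rs_code_def)
  then obtain b J where rows: "\<forall>i\<in>{1..s}. b i \<in> qrs m \<beta> (lin_dual n1 (rs_code n1 (k i) \<alpha>))"
    and cols: "\<forall>l<n1. \<exists>u\<in>Cin s. \<forall>q. w l q = rho_rep g h (s * m) (col m b l) q + u q"
    and J: "J \<in> {1..s}" and "b J \<noteq> (\<lambda>l t. 0)" and above: "\<forall>i\<in>{J<..s}. b i = (\<lambda>l t. 0)"
    using gc_code_diff_top_row[OF sdb _ w] by blast
  define L where "L = {l. l < n1 \<and> (\<exists>t<m. b J l t \<noteq> 0)}"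
  have "k J + 1 \<le> card L"
    unfolding L_def using J k_lt rows \<open>b J \<noteq> (\<lambda>l t. 0)\<close>
    by (intro qrs_lin_dual_rs_code_support[OF prim _ sdb]) auto
  moreover have "\<forall>l\<in>L. \<delta> J * real n2 \<le> real (wt n2 (w l))"
  proof
    fix l assume "l \<in> L"
    then obtain t where "l < n1" "t < m" "b J l t \<noteq> 0"
      by (auto simp: L_def)
    moreover obtain u where "u \<in> Cin s" "\<forall>q. w l q = rho_rep g h (s * m) (col m b l) q + u q"
      using cols \<open>l < n1\<close> by blast
    then have "w l = (\<lambda>q. rho_rep g h (s * m) (col m b l) q + u q)"
      by (simp add: fun_eq_iff)
    ultimately show "\<delta> J * real n2 \<le> real (wt n2 (w l))"
      using column_weight_ge[OF J _ nested _ _ symp _ \<open>u \<in> Cin s\<close>] J zero span dist above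
      by simp
  qed
  moreover have "L \<subseteq> {..<n1}"
    by (auto simp: L_def)
  ultimately have "real (k J + 1) * (\<delta> J * real n2) \<le> real (wt2 n1 n2 w)"
    using wt2_ge_card_mult by blast
  then show ?thesis
    using J by (auto simp: mult_ac)
qed

lemma relative_weight_bound:
  fixes \<delta> W :: real and k n1 n2 :: nat
  assumes "\<delta> * real n2 * real (k + 1) \<le> W" and "0 \<le> W" and "0 < n1" and "0 < n2"
  shows "\<delta> * (real k / real n1) \<le> W / (real n1 * real n2)"
proof -
  have "\<delta> * real k * real n2 \<le> W"
  proof (cases "0 \<le> \<delta>")
    case True
    then have "\<delta> * real k * real n2 \<le> \<delta> * real n2 * real (k + 1)"
      by (simp add: algebra_simps)
    then show ?thesis
      using assms(1) by linarith
  next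
    case False
    then have "\<delta> * real k * real n2 \<le> 0"
      by (simp add: mult_nonpos_nonneg)
    then show ?thesis
      using assms(2) by linarith
  qed
  then have "(\<delta> * real k * real n2) / (real n1 * real n2) \<le> W / (real n1 * real n2)"
    by (intro divide_right_mono) (simp_all add: mult_nonneg_nonneg)
  then show ?thesis
    using assms(3,4) by (simp add: field_simps)
qed

theorem lemma2:
  fixes \<alpha> :: "'f::field" and \<beta> :: "nat \<Rightarrow> 'f"
    and s m n1 n2 :: nat and k :: "nat \<Rightarrow> nat"
    and Cin :: "nat \<Rightarrow> (nat \<Rightarrow> f4) set" and \<delta> :: "nat \<Rightarrow> real"
    and g h :: "nat \<Rightarrow> nat \<Rightarrow> f4"
  assumes s2: "s \<ge> 2" and m2: "m \<ge> 2" and n1_def: "n1 = 2 ^ m - 1"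
    and card_f: "CARD('f) = 2 ^ m"
    and prim: "primitive_elem n1 \<alpha>"
    and sdb: "self_dual_basis m \<beta>"
    and k_range: "\<forall>i\<in>{1..s}. 1 \<le> k i \<and> k i \<le> 2 ^ (m - 1) - 1"
    and n2_ge: "n2 \<ge> s * m"
    and Cin_code: "\<forall>j\<in>{1..s}. additive n2 (Cin j) \<and> self_orth n2 (Cin j)
                              \<and> card (Cin j) = 2 ^ (n2 - j * m)"
    and Cin_nested: "\<forall>j\<in>{1..<s}. Cin (Suc j) \<subseteq> Cin j"
    and Cin_dist: "\<forall>j\<in>{1..s}. \<forall>v \<in> tdual n2 (Cin j) - Cin j. real (wt n2 v) \<ge> \<delta> j * real n2"
    and gh_in: "\<forall>p<s * m. g p \<in> tdual n2 (Cin s) \<and> h p \<in> tdual n2 (Cin s)"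
    and gh_symp: "\<forall>p<s * m. \<forall>p'<s * m. tip n2 (g p) (h p') = (p = p')
                      \<and> \<not> tip n2 (g p) (g p') \<and> \<not> tip n2 (h p) (h p')"
    and gh_span: "\<forall>j\<in>{1..s}. tdual n2 (Cin j) = plus_span (Cin j) (j * m) g h"
    and \<delta>_mono: "\<forall>j\<in>{1..<s}. \<delta> (Suc j) \<le> \<delta> j"
  shows "(\<forall>w \<in> gc_code m \<beta> s n1 n2 (\<lambda>i. lin_dual n1 (rs_code n1 (k i) \<alpha>)) (Cin s) g h
               - gc_code m \<beta> s n1 n2 (\<lambda>i. rs_code n1 (k i) \<alpha>) (Cin s) g h.
            real (wt2 n1 n2 w) \<ge> Min ((\<lambda>j. \<delta> j * real n2 * real (k j + 1)) ` {1..s}))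
       \<and> (\<forall>w \<in> gc_code m \<beta> s n1 n2 (\<lambda>i. lin_dual n1 (rs_code n1 (k i) \<alpha>)) (Cin s) g h
               - gc_code m \<beta> s n1 n2 (\<lambda>i. rs_code n1 (k i) \<alpha>) (Cin s) g h.
            real (wt2 n1 n2 w) / (real n1 * real n2) \<ge> Min ((\<lambda>j. \<delta> j * (real (k j) / real n1)) ` {1..s}))"
proof -
  have "2 ^ (m - 1) < (2::nat) ^ m"
    using m2 by simp
  have k_lt: "\<forall>i\<in>{1..s}. k i < n1"
  proof
    fix i assume "i \<in> {1..s}"
    then have "1 \<le> k i" "k i \<le> 2 ^ (m - 1) - 1"
      using k_range by auto
    then show "k i < n1"
      using \<open>2 ^ (m - 1) < 2 ^ m\<close> n1_def by arith
  qed
  have "0 < n1"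
    using k_lt s2 by force
  have "0 < s * m"
    using s2 m2 by simp
  then have "0 < n2"
    using n2_ge by linarith
  have zero: "\<forall>j\<in>{1..s}. (\<lambda>q. 0) \<in> Cin j"
    using Cin_code by (simp add: additive_def)
  have bound: "\<exists>J\<in>{1..s}. \<delta> J * real n2 * real (k J + 1) \<le> real (wt2 n1 n2 w)"
    if "w \<in> gc_code m \<beta> s n1 n2 (\<lambda>i. lin_dual n1 (rs_code n1 (k i) \<alpha>)) (Cin s) g h
             - gc_code m \<beta> s n1 n2 (\<lambda>i. rs_code n1 (k i) \<alpha>) (Cin s) g h" for w
    using gc_code_dual_diff_weight[OF prim k_lt sdb Cin_nested zero gh_span gh_symp Cin_dist that] .
  show ?thesis
  proof (intro conjI ballI)
    fix w assume "w \<in> gc_code m \<beta> s n1 n2 (\<lambda>i. lin_dual n1 (rs_code n1 (k i) \<alpha>)) (Cin s) g h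
             - gc_code m \<beta> s n1 n2 (\<lambda>i. rs_code n1 (k i) \<alpha>) (Cin s) g h"
    then obtain J where "J \<in> {1..s}" "\<delta> J * real n2 * real (k J + 1) \<le> real (wt2 n1 n2 w)"
      using bound by blast
    then show "Min ((\<lambda>j. \<delta> j * real n2 * real (k j + 1)) ` {1..s}) \<le> real (wt2 n1 n2 w)"
      using s2 by (subst Min_le_iff) auto
  next
    fix w assume "w \<in> gc_code m \<beta> s n1 n2 (\<lambda>i. lin_dual n1 (rs_code n1 (k i) \<alpha>)) (Cin s) g h
             - gc_code m \<beta> s n1 n2 (\<lambda>i. rs_code n1 (k i) \<alpha>) (Cin s) g h"
    then obtain J where "J \<in> {1..s}" and B: "\<delta> J * real n2 * real (k J + 1) \<le> real (wt2 n1 n2 w)"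
      using bound by blast
    moreover have "\<delta> J * (real (k J) / real n1) \<le> real (wt2 n1 n2 w) / (real n1 * real n2)"
      using relative_weight_bound[OF B _ \<open>0 < n1\<close> \<open>0 < n2\<close>] by simp
    ultimately show "Min ((\<lambda>j. \<delta> j * (real (k j) / real n1)) ` {1..s})
                       \<le> real (wt2 n1 n2 w) / (real n1 * real n2)"
      using s2 by (subst Min_le_iff) auto
  qed
qed

end
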